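(* Let $\mathcal{D}$ be a combinatorial description of a simple pseudoline arrangement. Then there is a line arrangement realizing $\mathcal{D}$ in the Euclidean plane $\mathbb{R}^2$ if and only if there is a line arrangement realizing $\mathcal{D}$ in the hyperbolic plane $\mathbb{H}^2$.
   Context: A pseudoline arrangement $\mathcal{A}$ is a collection of pseudolines ($x$-monotone curves in $\mathbb{R}^2$) such that each pair of curves intersects at most once. Each pseudoline $\ell\in\mathcal{A}$ is oriented and thus divides the plane into two open half-planes $\ell^-$ and $\ell^+$. The arrangement is simple if any two (pseudo)lines intersect exactly once and no three intersect in the same point. For $\mathcal{A}=\{\ell_1,\dots,\ell_n\}$, each point $p$ gets a sign vector $\sigma(p)=(\sigma_i(p))_{i=1}^n\in\{-,0,+\}^n$, where $\sigma_i(p)=-$ if $p\in\ell_i^-$, $0$ if $p\in\ell_i$, and $+$ if $p\in\ell_i^+$. The combinatorial description $\mathcal{D}$ of $\mathcal{A}$ is the set $\{\sigma(p)\mid p\in\mathbb{R}^2\}$, and an arrangement with this set of sign vectors is said to realize $\mathcal{D}$. A line arrangement in $\mathbb{H}^2$ is an arrangement of (oriented) hyperbolic lines, with sign vectors and combinatorial description defined analogously over points of $\mathbb{H}^2$. *)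

theory Defs
  imports Complex_Main
begin

datatype sign3 = Neg | Zer | Pos

definition sign_of :: "real \<Rightarrow> sign3" where
  "sign_of r = (if r < 0 then Neg else if r = 0 then Zer else Pos)"

(* Combinatorial description: the set of sign vectors of all points of the
   domain S, where the i-th oriented curve is given by a function g_i whose
   zero set is the curve, whose negative set is the half-plane l^- and
   whose positive set is the half-plane l^+. *)
definition comb_descr :: "(real \<times> real) set \<Rightarrow> ((real \<times> real) \<Rightarrow> real) list \<Rightarrow> sign3 list set" where
  "comb_descr S gs = {map (\<lambda>g. sign_of (g p)) gs | p. p \<in> S}"

(* An oriented pseudoline: the graph of a continuous function f : R -> R
   (an x-monotone curve), with an orientation flag o: if o then l^+ is the
   region above the graph, otherwise l^+ is the region below it. *)
type_synonym opseudoline = "(real \<Rightarrow> real) \<times> bool"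

definition pl_fun :: "opseudoline \<Rightarrow> (real \<times> real) \<Rightarrow> real" where
  "pl_fun l p = (if snd l then snd p - fst l (fst p) else fst l (fst p) - snd p)"

definition pseudoline_arrangement :: "opseudoline list \<Rightarrow> bool" where
  "pseudoline_arrangement A \<longleftrightarrow>
     (\<forall>l \<in> set A. continuous_on UNIV (fst l)) \<and>
     (\<forall>i < length A. \<forall>j < length A. i \<noteq> j \<longrightarrow>
        (\<forall>x1 x2. fst (A!i) x1 = fst (A!j) x1 \<and> fst (A!i) x2 = fst (A!j) x2 \<longrightarrow> x1 = x2))"

definition simple_pseudoline_arrangement :: "opseudoline list \<Rightarrow> bool" where
  "simple_pseudoline_arrangement A \<longleftrightarrow>
     pseudoline_arrangement A \<and>
     (\<forall>i < length A. \<forall>j < length A. i \<noteq> j \<longrightarrow>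
        (\<exists>!x. fst (A!i) x = fst (A!j) x)) \<and>
     (\<forall>i < length A. \<forall>j < length A. \<forall>k < length A.
        i \<noteq> j \<and> j \<noteq> k \<and> i \<noteq> k \<longrightarrow>
        \<not> (\<exists>x. fst (A!i) x = fst (A!j) x \<and> fst (A!j) x = fst (A!k) x))"

definition pseudo_descr :: "opseudoline list \<Rightarrow> sign3 list set" where
  "pseudo_descr A = comb_descr UNIV (map pl_fun A)"

(* An oriented Euclidean line {p. a*x + b*y = c} with (a,b) \<noteq> (0,0);
   l^- = {a*x+b*y < c}, l^+ = {a*x+b*y > c}.  Both orientations of every
   line are covered by (a,b,c) and (-a,-b,-c). *)
type_synonym oline = "real \<times> real \<times> real"

definition line_fun :: "oline \<Rightarrow> (real \<times> real) \<Rightarrow> real" where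
  "line_fun l p = (case l of (a, b, c) \<Rightarrow> a * fst p + b * snd p - c)"

definition nondeg_line :: "oline \<Rightarrow> bool" where
  "nondeg_line l = (case l of (a, b, c) \<Rightarrow> a \<noteq> 0 \<or> b \<noteq> 0)"

definition euclid_line_arrangement :: "oline list \<Rightarrow> bool" where
  "euclid_line_arrangement L \<longleftrightarrow>
     (\<forall>l \<in> set L. nondeg_line l) \<and>
     (\<forall>i < length L. \<forall>j < length L. i \<noteq> j \<longrightarrow>
        {p. line_fun (L!i) p = 0} \<noteq> {p. line_fun (L!j) p = 0})"

definition euclid_descr :: "oline list \<Rightarrow> sign3 list set" where
  "euclid_descr L = comb_descr UNIV (map line_fun L)"

(* The hyperbolic plane H^2 in the Beltrami-Klein model: the open unit disk,
   whose hyperbolic lines are exactly the nonempty intersections of Euclidean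
   lines with the disk (open chords); the two sides of a hyperbolic line are
   the intersections of the disk with the two Euclidean half-planes. *)
definition klein_disk :: "(real \<times> real) set" where
  "klein_disk = {p. (fst p)\<^sup>2 + (snd p)\<^sup>2 < 1}"

definition hyp_line_arrangement :: "oline list \<Rightarrow> bool" where
  "hyp_line_arrangement L \<longleftrightarrow>
     (\<forall>l \<in> set L. nondeg_line l \<and> (\<exists>p \<in> klein_disk. line_fun l p = 0)) \<and>
     (\<forall>i < length L. \<forall>j < length L. i \<noteq> j \<longrightarrow>
        {p \<in> klein_disk. line_fun (L!i) p = 0} \<noteq> {p \<in> klein_disk. line_fun (L!j) p = 0})"

definition hyp_descr :: "oline list \<Rightarrow> sign3 list set" where
  "hyp_descr L = comb_descr klein_disk (map line_fun L)"

end

theory Submission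
  imports Defs "HOL-Analysis.Analysis"
begin

(*
  Rescaling a Euclidean realization by a small homothety moves a witness point of each of its
  finitely many sign vectors into the unit disk, the Klein model of H^2. Since in the
  description of a simple pseudoline arrangement every curve carries a point and no two curves
  coincide, the rescaled chords form a hyperbolic line arrangement with the same description.

  Conversely, consider the Euclidean lines carrying a hyperbolic realization. Any two of them
  meet inside the disk (any two pseudolines cross), and two distinct lines meet only once, so
  every vertex of the Euclidean arrangement lies in the disk. Walking from a point p towards a
  vertex and stopping at the first new line reached stays in the closed cell of p and puts the
  walker on more lines; repeating this ends at a vertex or otherwise inside the disk. As the
  disk is open, the cell of p itself meets the disk.
*)

lemma sign_of_eq_Zer_iff [simp]: "sign_of r = Zer \<longleftrightarrow> r = 0"
  by (simp add: sign_of_def)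

lemma sign_of_convex_comb:
  assumes t: "0 < t" "t \<le> 1" and a: "a = 0 \<or> sign_of a = sign_of b"
  shows "sign_of ((1 - t) * a + t * b) = sign_of b"
proof -
  from a consider "0 < b" "0 \<le> a" | "b < 0" "a \<le> 0" | "b = 0" "a = 0"
    by (auto simp: sign_of_def split: if_splits)
  then show ?thesis
  proof cases
    case 1
    then have "0 < (1 - t) * a + t * b" using t by (simp add: add_nonneg_pos)
    then show ?thesis using 1 by (simp add: sign_of_def)
  next
    case 2
    then have "(1 - t) * a + t * b < 0"
      using t by (simp add: add_nonpos_neg mult_nonneg_nonpos mult_pos_neg)
    then show ?thesis using 2 by (simp add: sign_of_def)
  qed simp
qed

lemma sign_of_segment_before_first_zero:
  fixes a b t :: real
  assumes "a \<noteq> 0" "0 < t" and no_zero: "\<forall>s. 0 < s \<and> s < t \<longrightarrow> (1 - s) * a + s * b \<noteq> 0"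
  shows "(1 - t) * a + t * b = 0 \<or> sign_of ((1 - t) * a + t * b) = sign_of a"
proof (rule ccontr)
  define c where "c = (1 - t) * a + t * b"
  assume "\<not> ?thesis"
  then have ac: "a * c < 0"
    using \<open>a \<noteq> 0\<close> by (auto simp: sign_of_def c_def mult_less_0_iff split: if_splits)
  define r where "r = a / (a - c)"
  have "0 < r" "r < 1"
    using ac by (auto simp: r_def mult_less_0_iff divide_less_eq zero_less_divide_iff)
  then have "0 < t * r" "t * r < t"
    using \<open>0 < t\<close> by (simp_all add: mult_less_cancel_left1)
  moreover have "(1 - t * r) * a + (t * r) * b = a + r * (c - a)"
    by (simp add: c_def algebra_simps)
  moreover have "a + r * (c - a) = 0"
  proof -
    have "a - c \<noteq> 0" using ac by auto
    then show ?thesis by (simp add: r_def field_simps)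
  qed
  ultimately show False using no_zero by auto
qed

lemma line_fun_segment:
  "line_fun l (p + t *\<^sub>R (z - p)) = (1 - t) * line_fun l p + t * line_fun l z"
  by (cases l) (simp add: line_fun_def algebra_simps)

definition sign_vector :: "oline list \<Rightarrow> real \<times> real \<Rightarrow> sign3 list" where
  "sign_vector L p = map (\<lambda>l. sign_of (line_fun l p)) L"

lemma nth_sign_vector [simp]: "i < length L \<Longrightarrow> sign_vector L p ! i = sign_of (line_fun (L!i) p)"
  by (simp add: sign_vector_def)

lemma length_sign_vector [simp]: "length (sign_vector L p) = length L"
  by (simp add: sign_vector_def)

lemma euclid_descr_eq_range: "euclid_descr L = range (sign_vector L)"
  unfolding euclid_descr_def comb_descr_def sign_vector_def by (auto simp: comp_def)

lemma hyp_descr_eq_image: "hyp_descr L = sign_vector L ` klein_disk"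
  unfolding hyp_descr_def comb_descr_def sign_vector_def by (auto simp: comp_def)

lemma klein_disk_eq_ball: "klein_disk = ball 0 1"
proof -
  have "norm p < 1 \<longleftrightarrow> (fst p)\<^sup>2 + (snd p)\<^sup>2 < 1" for p :: "real \<times> real"
    by (simp add: norm_prod_def)
  then show ?thesis by (auto simp: klein_disk_def)
qed

definition in_closed_cell :: "oline list \<Rightarrow> real \<times> real \<Rightarrow> real \<times> real \<Rightarrow> bool" where
  "in_closed_cell L p q \<longleftrightarrow>
     (\<forall>l\<in>set L. line_fun l q = 0 \<or> sign_of (line_fun l q) = sign_of (line_fun l p))"

lemma in_closed_cell_refl: "in_closed_cell L p p"
  by (simp add: in_closed_cell_def)

lemma in_closed_cell_trans:
  "in_closed_cell L p q \<Longrightarrow> in_closed_cell L q r \<Longrightarrow> in_closed_cell L p r"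
  unfolding in_closed_cell_def by (metis sign_of_eq_Zer_iff)

lemma in_closed_cell_zero:
  "in_closed_cell L p q \<Longrightarrow> l \<in> set L \<Longrightarrow> line_fun l p = 0 \<Longrightarrow> line_fun l q = 0"
  unfolding in_closed_cell_def by (metis sign_of_eq_Zer_iff)

lemma finite_zeros_affine_family:
  fixes a b :: "'i \<Rightarrow> real"
  assumes "finite I"
  shows "finite {t. \<exists>i\<in>I. a i \<noteq> 0 \<and> (1 - t) * a i + t * b i = 0}"
proof (rule finite_subset)
  show "{t. \<exists>i\<in>I. a i \<noteq> 0 \<and> (1 - t) * a i + t * b i = 0} \<subseteq> (\<lambda>i. a i / (a i - b i)) ` I"
  proof
    fix t assume "t \<in> {t. \<exists>i\<in>I. a i \<noteq> 0 \<and> (1 - t) * a i + t * b i = 0}"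
    then obtain i where i: "i \<in> I" "a i \<noteq> 0" and "(1 - t) * a i + t * b i = 0" by blast
    then have "t * (a i - b i) = a i" by (simp add: algebra_simps)
    moreover from this have "a i - b i \<noteq> 0" using i by auto
    ultimately have "t = a i / (a i - b i)" by (simp add: eq_divide_eq)
    then show "t \<in> (\<lambda>i. a i / (a i - b i)) ` I" using i by blast
  qed
qed (use assms in simp)

lemma first_new_zero_on_segment:
  assumes zeros: "\<forall>l\<in>set L. line_fun l p = 0 \<longrightarrow> line_fun l z = 0"
    and l0: "l0 \<in> set L" "line_fun l0 p \<noteq> 0" "line_fun l0 z = 0"
  shows "\<exists>q. in_closed_cell L p q \<and> (\<exists>l\<in>set L. line_fun l p \<noteq> 0 \<and> line_fun l q = 0)"
proof -
  define T where "T = {t. 0 < t \<and> t \<le> 1 \<and>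
    (\<exists>l\<in>set L. line_fun l p \<noteq> 0 \<and> (1 - t) * line_fun l p + t * line_fun l z = 0)}"
  have "finite T"
    using finite_zeros_affine_family[of "set L" "\<lambda>l. line_fun l p" "\<lambda>l. line_fun l z"]
    by (rule rev_finite_subset) (auto simp: T_def)
  moreover have "1 \<in> T" using l0 by (auto simp: T_def)
  ultimately have t0: "Min T \<in> T" and t0_min: "\<And>t. t \<in> T \<Longrightarrow> Min T \<le> t"
    using Min_in by auto
  define q where "q = p + Min T *\<^sub>R (z - p)"
  have "in_closed_cell L p q"
    unfolding in_closed_cell_def q_def line_fun_segment
  proof
    fix l assume l: "l \<in> set L"
    show "(1 - Min T) * line_fun l p + Min T * line_fun l z = 0 \<or>
      sign_of ((1 - Min T) * line_fun l p + Min T * line_fun l z) = sign_of (line_fun l p)"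
    proof (cases "line_fun l p = 0")
      case True
      then show ?thesis using zeros l by simp
    next
      case False
      moreover have "0 < Min T" "Min T \<le> 1" using t0 by (auto simp: T_def)
      moreover have "(1 - s) * line_fun l p + s * line_fun l z \<noteq> 0" if "0 < s" "s < Min T" for s
      proof -
        have "s \<notin> T" using t0_min that(2) by force
        then show ?thesis using that \<open>Min T \<le> 1\<close> l False unfolding T_def by auto
      qed
      ultimately show ?thesis using sign_of_segment_before_first_zero by blast
    qed
  qed
  moreover have "\<exists>l\<in>set L. line_fun l p \<noteq> 0 \<and> line_fun l q = 0"
    using t0 by (auto simp: T_def q_def line_fun_segment)
  ultimately show ?thesis by blast
qed

lemma common_point_of_equal_lines:
  assumes "S \<noteq> {}" "\<forall>l\<in>set L. \<exists>v\<in>S. line_fun l v = 0" "\<forall>l\<in>set L. \<forall>l'\<in>set L. l = l'"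
  shows "\<exists>v\<in>S. \<forall>l\<in>set L. line_fun l v = 0"
proof (cases L)
  case Nil
  then show ?thesis using assms(1) by auto
next
  case (Cons k L')
  then obtain v where "v \<in> S" "line_fun k v = 0" using assms(2) by auto
  then show ?thesis using assms(3) Cons by (metis list.set_intros(1))
qed

lemma closed_cell_meets:
  assumes "S \<noteq> {}"
    and meets: "\<forall>l\<in>set L. \<forall>l'\<in>set L. \<exists>v\<in>S. line_fun l v = 0 \<and> line_fun l' v = 0"
    and vertices: "\<forall>l\<in>set L. \<forall>l'\<in>set L. l \<noteq> l' \<longrightarrow>
                     (\<forall>v. line_fun l v = 0 \<and> line_fun l' v = 0 \<longrightarrow> v \<in> S)"
  shows "\<exists>y\<in>S. in_closed_cell L p y"
proof (induction "card {l\<in>set L. line_fun l p \<noteq> 0}" arbitrary: p rule: less_induct)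
  case less
  show ?case
  proof (cases "\<exists>l\<in>set L. \<exists>l'\<in>set L. l \<noteq> l' \<and> line_fun l p = 0 \<and> line_fun l' p = 0")
    case True
    then have "p \<in> S" using vertices by blast
    then show ?thesis using in_closed_cell_refl by blast
  next
    case False
    then have unique: "l = l'"
      if "l \<in> set L" "l' \<in> set L" "line_fun l p = 0" "line_fun l' p = 0" for l l'
      using that by blast
    show ?thesis
    proof (cases "\<forall>l\<in>set L. line_fun l p = 0")
      case True
      then have "\<forall>l\<in>set L. \<forall>l'\<in>set L. l = l'" using unique by simp
      then obtain v where "v \<in> S" "\<forall>l\<in>set L. line_fun l v = 0"
        using common_point_of_equal_lines[OF \<open>S \<noteq> {}\<close>] meets by blast
      then show ?thesis unfolding in_closed_cell_def by auto
    next
      case False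
      then obtain m where m: "m \<in> set L" "line_fun m p \<noteq> 0" by blast
      obtain k where k: "k \<in> set L" "\<forall>l\<in>set L. line_fun l p = 0 \<longrightarrow> l = k"
        using m unique by blast
      obtain z where z: "z \<in> S" "line_fun k z = 0" "line_fun m z = 0"
        using meets k m by blast
      obtain q l where q: "in_closed_cell L p q" "l \<in> set L" "line_fun l p \<noteq> 0" "line_fun l q = 0"
        using first_new_zero_on_segment[of L p z m] k z m by blast
      have "{l\<in>set L. line_fun l q \<noteq> 0} \<subset> {l\<in>set L. line_fun l p \<noteq> 0}"
        using in_closed_cell_zero[OF q(1)] q(2-4) by blast
      then have "card {l\<in>set L. line_fun l q \<noteq> 0} < card {l\<in>set L. line_fun l p \<noteq> 0}"
        by (rule psubset_card_mono[rotated]) simp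
      then obtain y where "y \<in> S" "in_closed_cell L q y" using less by blast
      then show ?thesis using in_closed_cell_trans q(1) by blast
    qed
  qed
qed

lemma sign_vector_segment:
  assumes "in_closed_cell L p y" "0 < t" "t \<le> 1"
  shows "sign_vector L (y + t *\<^sub>R (p - y)) = sign_vector L p"
  using assms unfolding sign_vector_def in_closed_cell_def line_fun_segment
  by (auto intro: sign_of_convex_comb)

lemma open_set_meets_cell:
  assumes "open S" "y \<in> S" "in_closed_cell L p y"
  shows "\<exists>q\<in>S. sign_vector L q = sign_vector L p"
proof -
  have "((\<lambda>t. y + t *\<^sub>R (p - y)) \<longlongrightarrow> y + 0 *\<^sub>R (p - y)) (at_right 0)"
    by (intro tendsto_intros)
  then have "\<forall>\<^sub>F t in at_right 0. y + t *\<^sub>R (p - y) \<in> S"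
    using assms(1,2) by (auto intro: topological_tendstoD)
  moreover have "\<forall>\<^sub>F t in at_right 0. t \<in> {0<..<1::real}"
    by (rule eventually_at_right_real) simp
  ultimately obtain t where "y + t *\<^sub>R (p - y) \<in> S" "0 < t" "t < 1"
    using eventually_happens'[OF trivial_limit_at_right_real eventually_conj] by force
  then show ?thesis using sign_vector_segment[OF assms(3)] by fastforce
qed

lemma sign_vectors_attained_in_open_set:
  assumes "open S" "S \<noteq> {}"
    and "\<forall>l\<in>set L. \<forall>l'\<in>set L. \<exists>v\<in>S. line_fun l v = 0 \<and> line_fun l' v = 0"
    and "\<forall>l\<in>set L. \<forall>l'\<in>set L. l \<noteq> l' \<longrightarrow>
           (\<forall>v. line_fun l v = 0 \<and> line_fun l' v = 0 \<longrightarrow> v \<in> S)"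
  shows "sign_vector L ` S = range (sign_vector L)"
proof
  show "range (sign_vector L) \<subseteq> sign_vector L ` S"
  proof
    fix s assume "s \<in> range (sign_vector L)"
    then obtain p where p: "s = sign_vector L p" by blast
    obtain y where "y \<in> S" "in_closed_cell L p y"
      using closed_cell_meets[OF assms(2-4)] by blast
    then obtain q where "q \<in> S" "sign_vector L q = s"
      using open_set_meets_cell[OF assms(1)] p by metis
    then show "s \<in> sign_vector L ` S" by blast
  qed
qed auto

lemma UNIV_sign3: "(UNIV :: sign3 set) = {Neg, Zer, Pos}"
  using sign3.exhaust by auto

lemma finite_range_sign_vector: "finite (range (sign_vector L))"
proof (rule finite_subset)
  show "range (sign_vector L) \<subseteq> {xs. set xs \<subseteq> UNIV \<and> length xs = length L}" by auto
  show "finite {xs. set xs \<subseteq> (UNIV :: sign3 set) \<and> length xs = length L}"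
    by (rule finite_lists_length_eq) (simp add: UNIV_sign3)
qed

lemma finite_range_image_ball:
  fixes f :: "'a::real_normed_vector \<Rightarrow> 'b"
  assumes "finite (range f)"
  shows "\<exists>R>0. f ` ball 0 R = range f"
proof -
  obtain P where "finite P" "range f = f ` P"
    using finite_subset_image[OF assms, of f UNIV] by auto
  moreover obtain R where "R > 0" "P \<subseteq> ball 0 R"
    using bounded_subset_ballD[OF finite_imp_bounded[OF \<open>finite P\<close>]] by blast
  ultimately show ?thesis by blast
qed

definition scale_line :: "real \<Rightarrow> oline \<Rightarrow> oline" where
  "scale_line R l = (case l of (a, b, c) \<Rightarrow> (R * a, R * b, c))"

lemma line_fun_scale_line: "line_fun (scale_line R l) x = line_fun l (R *\<^sub>R x)"
  by (cases l; cases x) (simp add: scale_line_def line_fun_def)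

lemma nondeg_scale_line: "R \<noteq> 0 \<Longrightarrow> nondeg_line (scale_line R l) \<longleftrightarrow> nondeg_line l"
  by (cases l) (simp add: scale_line_def nondeg_line_def)

lemma hyp_descr_scale_line:
  assumes "R > 0"
  shows "hyp_descr (map (scale_line R) L) = sign_vector L ` ball 0 R"
proof -
  have "sign_vector (map (scale_line R) L) x = sign_vector L (R *\<^sub>R x)" for x
    by (simp add: sign_vector_def line_fun_scale_line)
  then have "hyp_descr (map (scale_line R) L) = sign_vector L ` (\<lambda>x. R *\<^sub>R x) ` ball 0 1"
    by (simp add: hyp_descr_eq_image klein_disk_eq_ball image_image)
  also have "\<dots> = sign_vector L ` ball 0 R"
    using assms by (simp add: ball_scale)
  finally show ?thesis .
qed

lemma line_zero_sets_eq_if_two_common_points: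
  assumes "nondeg_line l" "nondeg_line l'"
    and "line_fun l v = 0" "line_fun l' v = 0" "line_fun l w = 0" "line_fun l' w = 0" "v \<noteq> w"
  shows "{p. line_fun l p = 0} = {p. line_fun l' p = 0}"
proof -
  obtain a b c a' b' c' where l: "l = (a, b, c)" "l' = (a', b', c')"
    by (metis prod_cases3)
  define d1 d2 where "d1 = fst w - fst v" and "d2 = snd w - snd v"
  have "a * d1 + b * d2 = 0" "a' * d1 + b' * d2 = 0"
    using assms(3-6) by (simp_all add: l line_fun_def d1_def d2_def algebra_simps)
  moreover have "d1 \<noteq> 0 \<or> d2 \<noteq> 0"
    using \<open>v \<noteq> w\<close> by (auto simp: d1_def d2_def prod_eq_iff)
  ultimately have det: "a * b' - a' * b = 0"
  proof -
    assume "a * d1 + b * d2 = 0" "a' * d1 + b' * d2 = 0" "d1 \<noteq> 0 \<or> d2 \<noteq> 0"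
    moreover have "(a * b' - a' * b) * d1 = b' * (a * d1 + b * d2) - b * (a' * d1 + b' * d2)"
      and "(a * b' - a' * b) * d2 = a * (a' * d1 + b' * d2) - a' * (a * d1 + b * d2)"
      by (simp_all add: algebra_simps)
    ultimately show ?thesis by auto
  qed
  have "line_fun l p = 0 \<longleftrightarrow> line_fun l' p = 0" for p
  proof -
    define X Y where "X = line_fun l p" and "Y = line_fun l' p"
    have XY: "X = a * (fst p - fst v) + b * (snd p - snd v)"
      "Y = a' * (fst p - fst v) + b' * (snd p - snd v)"
      using assms(3,4) by (simp_all add: X_def Y_def l line_fun_def algebra_simps)
    have "a * Y - a' * X = (a * b' - a' * b) * (snd p - snd v)"
      and "b * Y - b' * X = - (a * b' - a' * b) * (fst p - fst v)"
      unfolding XY by (simp_all add: algebra_simps)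
    then have "a * Y = a' * X" "b * Y = b' * X"
      using det by simp_all
    moreover have "a \<noteq> 0 \<or> b \<noteq> 0" "a' \<noteq> 0 \<or> b' \<noteq> 0"
      using assms(1,2) by (simp_all add: l nondeg_line_def)
    ultimately have "X = 0 \<longleftrightarrow> Y = 0" by auto
    then show ?thesis by (simp add: X_def Y_def)
  qed
  then show ?thesis by blast
qed

(* Taking i = j expresses that every curve of the arrangement contains some point. *)
definition pairwise_crossing_descr :: "nat \<Rightarrow> sign3 list set \<Rightarrow> bool" where
  "pairwise_crossing_descr n D \<longleftrightarrow> D \<noteq> {} \<and> (\<forall>s\<in>D. length s = n) \<and>
     (\<forall>i<n. \<forall>j<n. \<exists>s\<in>D. s!i = Zer \<and> s!j = Zer) \<and>
     (\<forall>i<n. \<forall>j<n. i \<noteq> j \<longrightarrow> (\<exists>s\<in>D. s!i = Zer \<and> s!j \<noteq> Zer))"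

lemma pseudo_descr_eq_range:
  "pseudo_descr A = range (\<lambda>p. map (\<lambda>l. sign_of (pl_fun l p)) A)"
  unfolding pseudo_descr_def comb_descr_def by (auto simp: comp_def)

lemma pl_fun_eq_0_iff: "pl_fun l (x, y) = 0 \<longleftrightarrow> fst l x = y"
  by (auto simp: pl_fun_def)

lemma pseudo_descr_pairwise_crossing:
  assumes A: "simple_pseudoline_arrangement A"
  shows "pairwise_crossing_descr (length A) (pseudo_descr A)"
proof -
  define sv where "sv p = map (\<lambda>l. sign_of (pl_fun l p)) A" for p
  have sv_in: "sv p \<in> pseudo_descr A" for p
    unfolding pseudo_descr_eq_range sv_def by (rule rangeI)
  have sv_nth: "sv (x, y) ! i = Zer \<longleftrightarrow> fst (A!i) x = y" if "i < length A" for i x y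
    using that by (simp add: sv_def pl_fun_eq_0_iff)
  have crossing: "\<exists>s\<in>pseudo_descr A. s!i = Zer \<and> s!j = Zer"
    if ij: "i < length A" "j < length A" for i j
  proof (cases "i = j")
    case True
    then show ?thesis using sv_in[of "(0, fst (A!i) 0)"] sv_nth ij by blast
  next
    case False
    then obtain x where "fst (A!i) x = fst (A!j) x"
      using A ij unfolding simple_pseudoline_arrangement_def by blast
    then show ?thesis using sv_in[of "(x, fst (A!i) x)"] sv_nth ij by metis
  qed
  have distinct: "\<exists>s\<in>pseudo_descr A. s!i = Zer \<and> s!j \<noteq> Zer"
    if ij: "i < length A" "j < length A" "i \<noteq> j" for i j
  proof -
    have "\<not> (fst (A!i) 0 = fst (A!j) 0 \<and> fst (A!i) 1 = fst (A!j) 1)"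
      using A ij unfolding simple_pseudoline_arrangement_def pseudoline_arrangement_def
      by (metis zero_neq_one)
    then obtain x where "fst (A!i) x \<noteq> fst (A!j) x" by blast
    then show ?thesis using sv_in[of "(x, fst (A!i) x)"] sv_nth ij by metis
  qed
  show ?thesis
    unfolding pairwise_crossing_descr_def
    using crossing distinct by (auto simp: pseudo_descr_eq_range)
qed

lemma length_eq_if_pairwise_crossing_descr:
  "pairwise_crossing_descr n (sign_vector L ` S) \<Longrightarrow> length L = n"
  unfolding pairwise_crossing_descr_def by auto

lemma hyp_line_arrangement_if_pairwise_crossing:
  assumes nondeg: "\<forall>l\<in>set H. nondeg_line l" and D: "pairwise_crossing_descr n (hyp_descr H)"
  shows "hyp_line_arrangement H"
proof -
  have n: "length H = n"
    using D unfolding hyp_descr_eq_image by (rule length_eq_if_pairwise_crossing_descr)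
  have "\<exists>p\<in>klein_disk. line_fun l p = 0" if "l \<in> set H" for l
  proof -
    obtain i where i: "i < length H" "l = H!i" using \<open>l \<in> set H\<close> by (metis in_set_conv_nth)
    then obtain p where "p \<in> klein_disk" "sign_vector H p ! i = Zer"
      using D n unfolding pairwise_crossing_descr_def hyp_descr_eq_image by blast
    then show ?thesis using i by auto
  qed
  moreover have "{p \<in> klein_disk. line_fun (H!i) p = 0} \<noteq> {p \<in> klein_disk. line_fun (H!j) p = 0}"
    if ij: "i < length H" "j < length H" "i \<noteq> j" for i j
  proof -
    obtain p where "p \<in> klein_disk" "sign_vector H p ! i = Zer" "sign_vector H p ! j \<noteq> Zer"
      using D n ij unfolding pairwise_crossing_descr_def hyp_descr_eq_image by blast
    then show ?thesis using ij by auto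
  qed
  ultimately show ?thesis
    using nondeg unfolding hyp_line_arrangement_def by blast
qed

lemma euclid_descr_eq_hyp_descr:
  assumes H: "hyp_line_arrangement H" and D: "pairwise_crossing_descr n (hyp_descr H)"
  shows "euclid_descr H = hyp_descr H"
proof -
  have n: "length H = n"
    using D unfolding hyp_descr_eq_image by (rule length_eq_if_pairwise_crossing_descr)
  have meets: "\<exists>v\<in>klein_disk. line_fun l v = 0 \<and> line_fun l' v = 0"
    if l: "l \<in> set H" "l' \<in> set H" for l l'
  proof -
    obtain i where i: "i < n" "l = H!i" using l(1) n by (metis in_set_conv_nth)
    obtain j where j: "j < n" "l' = H!j" using l(2) n by (metis in_set_conv_nth)
    obtain v where "v \<in> klein_disk" "sign_vector H v ! i = Zer" "sign_vector H v ! j = Zer"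
      using D i(1) j(1) unfolding pairwise_crossing_descr_def hyp_descr_eq_image by blast
    then show ?thesis using i j n by auto
  qed
  have vertices: "v \<in> klein_disk"
    if l: "l \<in> set H" "l' \<in> set H" "l \<noteq> l'" and v: "line_fun l v = 0" "line_fun l' v = 0"
    for l l' v
  proof (rule ccontr)
    assume "v \<notin> klein_disk"
    obtain w where w: "w \<in> klein_disk" "line_fun l w = 0" "line_fun l' w = 0"
      using meets l(1,2) by blast
    have "nondeg_line l" "nondeg_line l'"
      using H l(1,2) unfolding hyp_line_arrangement_def by auto
    moreover have "v \<noteq> w" using w(1) \<open>v \<notin> klein_disk\<close> by blast
    ultimately have "{p. line_fun l p = 0} = {p. line_fun l' p = 0}"
      using line_zero_sets_eq_if_two_common_points v w(2,3) by blast
    moreover obtain i where i: "i < length H" "l = H!i" using l(1) by (metis in_set_conv_nth)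
    moreover obtain j where j: "j < length H" "l' = H!j" using l(2) by (metis in_set_conv_nth)
    ultimately show False
      using H l(3) unfolding hyp_line_arrangement_def by blast
  qed
  have "sign_vector H ` klein_disk = range (sign_vector H)"
    by (rule sign_vectors_attained_in_open_set)
      (use meets vertices in \<open>auto simp: klein_disk_eq_ball\<close>)
  then show ?thesis
    unfolding euclid_descr_eq_range hyp_descr_eq_image by simp
qed

lemma hyp_realization_if_euclid:
  assumes L: "euclid_line_arrangement L" and D: "pairwise_crossing_descr n (euclid_descr L)"
  shows "\<exists>H. hyp_line_arrangement H \<and> hyp_descr H = euclid_descr L"
proof -
  obtain R where "R > 0" and R: "sign_vector L ` ball 0 R = range (sign_vector L)"
    using finite_range_image_ball[OF finite_range_sign_vector] by blast
  define H where "H = map (scale_line R) L"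
  have "hyp_descr H = euclid_descr L"
    using hyp_descr_scale_line[OF \<open>R > 0\<close>] R by (simp add: H_def euclid_descr_eq_range)
  moreover have "\<forall>l\<in>set H. nondeg_line l"
    using L \<open>R > 0\<close> by (auto simp: H_def nondeg_scale_line euclid_line_arrangement_def)
  ultimately have "hyp_line_arrangement H"
    using hyp_line_arrangement_if_pairwise_crossing D by simp
  with \<open>hyp_descr H = euclid_descr L\<close> show ?thesis by blast
qed

lemma euclid_line_arrangement_if_hyp:
  "hyp_line_arrangement H \<Longrightarrow> euclid_line_arrangement H"
  unfolding hyp_line_arrangement_def euclid_line_arrangement_def by blast

theorem proposition1:
  fixes D :: "sign3 list set"
  assumes "\<exists>A. simple_pseudoline_arrangement A \<and> pseudo_descr A = D"
  shows "(\<exists>L. euclid_line_arrangement L \<and> euclid_descr L = D) \<longleftrightarrow>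
         (\<exists>H. hyp_line_arrangement H \<and> hyp_descr H = D)"
proof -
  obtain A where "simple_pseudoline_arrangement A" "pseudo_descr A = D"
    using assms by blast
  then have D: "pairwise_crossing_descr (length A) D"
    using pseudo_descr_pairwise_crossing by blast
  show ?thesis
  proof
    assume "\<exists>L. euclid_line_arrangement L \<and> euclid_descr L = D"
    then obtain L where "euclid_line_arrangement L" "euclid_descr L = D" by blast
    then show "\<exists>H. hyp_line_arrangement H \<and> hyp_descr H = D"
      using hyp_realization_if_euclid D by blast
  next
    assume "\<exists>H. hyp_line_arrangement H \<and> hyp_descr H = D"
    then obtain H where H: "hyp_line_arrangement H" "hyp_descr H = D" by blast
    then have "euclid_descr H = D"
      using euclid_descr_eq_hyp_descr D by blast
    then show "\<exists>L. euclid_line_arrangement L \<and> euclid_descr L = D"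
      using euclid_line_arrangement_if_hyp H(1) by blast
  qed
qed

end
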